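(* Let $S$ be a smooth surface in $\mathbb{R}^3$ which satisfies $aH + bK = c$ for some real constants $a,b,c$ with $a^2+b^2\neq 0$, where $H$ and $K$ denote the mean curvature and the Gauss curvature of $S$. Suppose $S$ is foliated by pieces of circles lying in a one-parameter family of parallel planes. Then either $S$ is a piece of a surface of revolution, or $S$ is part of one of the Riemann minimal examples, or $S$ is part of a generalized cone.
   Context: A generalized cone is a surface foliated by circles in parallel planes whose centres lie on a straight line and whose radius is a linear function; locally, after a rigid motion, it can be parametrized by $\mathbf{X}(u,v) = (f(u), g(u), u) + r(u)(\cos v, \sin v, 0)$ with $f$, $g$ and $r>0$ linear (affine) functions of $u$. It has $K=0$. The Riemann minimal examples are the minimal surfaces ($H=0$) discovered by Riemann which are foliated by circles in parallel planes but are not surfaces of revolution; locally, after a rigid motion, they are parametrized as $\mathbf{X}(u,v) = (f(u), g(u), u) + r(u)(\cos v, \sin v, 0)$ with $f' = \lambda r^2$, $g' = \mu r^2$ for constants $\lambda,\mu$ with $\lambda^2+\mu^2\neq 0$, and $1+(\lambda^2+\mu^2)r^4 + r'^2 - r r'' = 0$. The circles in parallel planes are not assumed a priori to be coaxial. *)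

theory Defs
  imports "HOL-Analysis.Analysis" "HOL-Analysis.Cross3"
begin

definition smooth_on :: "real set \<Rightarrow> (real \<Rightarrow> real) \<Rightarrow> bool" where
  "smooth_on I h \<longleftrightarrow> (\<forall>n. \<forall>x\<in>I. ((deriv ^^ n) h) differentiable (at x))"

definition Xu :: "(real \<Rightarrow> real \<Rightarrow> real^3) \<Rightarrow> real \<Rightarrow> real \<Rightarrow> real^3" where
  "Xu X u v = vector_derivative (\<lambda>s. X s v) (at u)"
definition Xv :: "(real \<Rightarrow> real \<Rightarrow> real^3) \<Rightarrow> real \<Rightarrow> real \<Rightarrow> real^3" where
  "Xv X u v = vector_derivative (\<lambda>t. X u t) (at v)"
definition Xuu :: "(real \<Rightarrow> real \<Rightarrow> real^3) \<Rightarrow> real \<Rightarrow> real \<Rightarrow> real^3" where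
  "Xuu X u v = vector_derivative (\<lambda>s. Xu X s v) (at u)"
definition Xuv :: "(real \<Rightarrow> real \<Rightarrow> real^3) \<Rightarrow> real \<Rightarrow> real \<Rightarrow> real^3" where
  "Xuv X u v = vector_derivative (\<lambda>t. Xu X u t) (at v)"
definition Xvv :: "(real \<Rightarrow> real \<Rightarrow> real^3) \<Rightarrow> real \<Rightarrow> real \<Rightarrow> real^3" where
  "Xvv X u v = vector_derivative (\<lambda>t. Xv X u t) (at v)"

definition unit_normal :: "(real \<Rightarrow> real \<Rightarrow> real^3) \<Rightarrow> real \<Rightarrow> real \<Rightarrow> real^3" where
  "unit_normal X u v = (1 / norm (cross3 (Xu X u v) (Xv X u v))) *\<^sub>R cross3 (Xu X u v) (Xv X u v)"

definition fffE where "fffE X u v = Xu X u v \<bullet> Xu X u v"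
definition fffF where "fffF X u v = Xu X u v \<bullet> Xv X u v"
definition fffG where "fffG X u v = Xv X u v \<bullet> Xv X u v"
definition sffL where "sffL X u v = Xuu X u v \<bullet> unit_normal X u v"
definition sffM where "sffM X u v = Xuv X u v \<bullet> unit_normal X u v"
definition sffN where "sffN X u v = Xvv X u v \<bullet> unit_normal X u v"

definition gauss_curv :: "(real \<Rightarrow> real \<Rightarrow> real^3) \<Rightarrow> real \<Rightarrow> real \<Rightarrow> real" where
  "gauss_curv X u v =
     (sffL X u v * sffN X u v - (sffM X u v)\<^sup>2) /
     (fffE X u v * fffG X u v - (fffF X u v)\<^sup>2)"

definition mean_curv :: "(real \<Rightarrow> real \<Rightarrow> real^3) \<Rightarrow> real \<Rightarrow> real \<Rightarrow> real" where
  "mean_curv X u v =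
     (fffE X u v * sffN X u v - 2 * fffF X u v * sffM X u v + fffG X u v * sffL X u v) /
     (2 * (fffE X u v * fffG X u v - (fffF X u v)\<^sup>2))"

definition circle_surface ::
  "(real \<Rightarrow> real) \<Rightarrow> (real \<Rightarrow> real) \<Rightarrow> (real \<Rightarrow> real) \<Rightarrow> real \<Rightarrow> real \<Rightarrow> real^3" where
  "circle_surface f g r u v =
     vector [f u, g u, u] + r u *\<^sub>R vector [cos v, sin v, 0]"

definition affine_fun_on :: "real set \<Rightarrow> (real \<Rightarrow> real) \<Rightarrow> bool" where
  "affine_fun_on I h \<longleftrightarrow> (\<exists>\<alpha> \<beta>. \<forall>u\<in>I. h u = \<alpha> * u + \<beta>)"

end

theory Submission
  imports Defs "HOL-Complex_Analysis.Complex_Analysis"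
begin

text \<open>
  At height \<open>u\<close> write the point of the circle as \<open>(x, y) = (cos v, sin v)\<close>. In terms of the
  2-jet of \<open>f, g, r\<close> at \<open>u\<close>, the relation \<open>a H + b K = c\<close> squares to a homogeneous polynomial
  identity \<open>W(x, y, 1) = 0\<close>, valid on an arc of the circle. Analytic continuation extends it to
  the whole complexified circle and, by homogeneity, to the isotropic point \<open>(1, \<i>, 0)\<close>, where
  \<open>W\<close> reduces to \<open>-(2 c r (f' + \<i> g')\<^sup>4)\<^sup>2\<close>. Hence \<open>f' = g' = 0\<close> when \<open>c \<noteq> 0\<close>. For \<open>c = 0\<close> one reads off
  \<open>f'' = g'' = r'' = 0\<close> if \<open>a = 0\<close>, the Riemann equations \<open>r f'' = 2 r' f'\<close>, \<open>r g'' = 2 r' g'\<close>,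
  \<open>1 + f'\<^sup>2 + g'\<^sup>2 + r'\<^sup>2 = r r''\<close> if \<open>b = 0\<close>, and \<open>f' = g' = 0\<close> otherwise. Integrating
  these equations along the axis yields the surface of revolution, the generalized cone and the
  Riemann example.
\<close>

text \<open>
  The polynomials below live in an arbitrary real field, so that one expression can be evaluated
  both at real points of the circle and at complex points.
\<close>

definition lform :: "real \<Rightarrow> real \<Rightarrow> real \<Rightarrow> 'a::real_field \<Rightarrow> 'a \<Rightarrow> 'a \<Rightarrow> 'a" where
  "lform \<alpha> \<beta> \<gamma> x y d = of_real \<alpha> * x + of_real \<beta> * y + of_real \<gamma> * d"

lemma lform_real: "lform \<alpha> \<beta> \<gamma> x y d = \<alpha> * x + \<beta> * y + \<gamma> * (d::real)"
  by (simp add: lform_def)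

lemma lform_of_real: "of_real (lform \<alpha> \<beta> \<gamma> x y d) = lform \<alpha> \<beta> \<gamma> (of_real x) (of_real y) (of_real d)"
  by (simp add: lform_def)

lemma lform_scale: "lform \<alpha> \<beta> \<gamma> (k * x) (k * y) (k * d) = k * lform \<alpha> \<beta> \<gamma> x y d"
  by (simp add: lform_def algebra_simps)

lemma lform_isotropic: "lform \<alpha> \<beta> \<gamma> 1 \<i> 0 = Complex \<alpha> \<beta>"
  by (simp add: lform_def complex_eq_iff)

section \<open>Curvatures of a surface foliated by horizontal circles\<close>

lemma has_vector_derivative_vector3:
  fixes A B C :: "real \<Rightarrow> real"
  assumes "(A has_real_derivative A') (at x)" "(B has_real_derivative B') (at x)"
    "(C has_real_derivative C') (at x)"
  shows "((\<lambda>s. vector [A s, B s, C s] :: real^3) has_vector_derivative vector [A', B', C']) (at x)"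
proof -
  have "((\<lambda>s. A s *\<^sub>R (vector [1, 0, 0] :: real^3) + B s *\<^sub>R vector [0, 1, 0] + C s *\<^sub>R vector [0, 0, 1])
      has_vector_derivative A' *\<^sub>R vector [1, 0, 0] + B' *\<^sub>R vector [0, 1, 0] + C' *\<^sub>R vector [0, 0, 1]) (at x)"
    using assms by (auto intro!: derivative_eq_intros)
  moreover have "\<And>a b c :: real. a *\<^sub>R (vector [1, 0, 0] :: real^3) + b *\<^sub>R vector [0, 1, 0] + c *\<^sub>R vector [0, 0, 1]
      = vector [a, b, c]"
    by (auto simp: vec_eq_iff forall_3 vector_3)
  ultimately show ?thesis
    by simp
qed

lemma circle_surface_eq: "circle_surface f g r s t = vector [f s + r s * cos t, g s + r s * sin t, s]"
  by (auto simp: circle_surface_def vec_eq_iff forall_3 vector_3)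

lemma Xu_circle_surface:
  assumes "f differentiable (at u)" "g differentiable (at u)" "r differentiable (at u)"
  shows "Xu (circle_surface f g r) u v
    = vector [deriv f u + deriv r u * cos v, deriv g u + deriv r u * sin v, 1]"
  unfolding Xu_def circle_surface_eq
  using assms[unfolded DERIV_deriv_iff_real_differentiable[symmetric]]
  by (intro vector_derivative_at has_vector_derivative_vector3 derivative_eq_intros) auto

lemma Xv_circle_surface: "Xv (circle_surface f g r) u v = vector [- r u * sin v, r u * cos v, 0]"
  unfolding Xv_def circle_surface_eq
  by (intro vector_derivative_at has_vector_derivative_vector3 derivative_eq_intros) auto

lemma Xvv_circle_surface: "Xvv (circle_surface f g r) u v = vector [- r u * cos v, - r u * sin v, 0]"
  unfolding Xvv_def Xv_circle_surface
  by (intro vector_derivative_at has_vector_derivative_vector3 derivative_eq_intros) auto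

lemma Xuv_circle_surface:
  assumes "f differentiable (at u)" "g differentiable (at u)" "r differentiable (at u)"
  shows "Xuv (circle_surface f g r) u v = vector [- deriv r u * sin v, deriv r u * cos v, 0]"
  unfolding Xuv_def Xu_circle_surface[OF assms]
  by (intro vector_derivative_at has_vector_derivative_vector3 derivative_eq_intros) auto

lemma Xuu_circle_surface:
  assumes "open I" "u \<in> I"
    and "\<And>s. s \<in> I \<Longrightarrow> f differentiable (at s) \<and> g differentiable (at s) \<and> r differentiable (at s)"
    and "deriv f differentiable (at u)" "deriv g differentiable (at u)" "deriv r differentiable (at u)"
  shows "Xuu (circle_surface f g r) u v
    = vector [deriv (deriv f) u + deriv (deriv r) u * cos v, deriv (deriv g) u + deriv (deriv r) u * sin v, 0]"
proof -
  have "((\<lambda>s. vector [deriv f s + deriv r s * cos v, deriv g s + deriv r s * sin v, 1] :: real^3)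
      has_vector_derivative
        vector [deriv (deriv f) u + deriv (deriv r) u * cos v, deriv (deriv g) u + deriv (deriv r) u * sin v, 0])
      (at u)"
    using assms(4-6)[unfolded DERIV_deriv_iff_real_differentiable[symmetric]]
    by (intro has_vector_derivative_vector3 derivative_eq_intros) auto
  then have "((\<lambda>s. Xu (circle_surface f g r) s v) has_vector_derivative
        vector [deriv (deriv f) u + deriv (deriv r) u * cos v, deriv (deriv g) u + deriv (deriv r) u * sin v, 0])
      (at u)"
    by (rule has_vector_derivative_transform_within_open[OF _ assms(1,2)])
       (simp add: Xu_circle_surface assms(3))
  then show ?thesis
    unfolding Xuu_def by (rule vector_derivative_at)
qed

context
  fixes X :: "real \<Rightarrow> real \<Rightarrow> real^3" and u v x y r f1 g1 r1 f2 g2 r2 :: real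
  assumes Xu: "Xu X u v = vector [f1 + r1 * x, g1 + r1 * y, 1]"
    and Xv: "Xv X u v = vector [- r * y, r * x, 0]"
    and Xuu: "Xuu X u v = vector [f2 + r2 * x, g2 + r2 * y, 0]"
    and Xuv: "Xuv X u v = vector [- r1 * y, r1 * x, 0]"
    and Xvv: "Xvv X u v = vector [- r * x, - r * y, 0]"
    and circle: "x\<^sup>2 + y\<^sup>2 = 1" and "r > 0"
begin

lemma unit_normal_circle_frame:
  defines "P \<equiv> lform f1 g1 r1 x y 1"
  shows "unit_normal X u v = (1 / sqrt (1 + P\<^sup>2)) *\<^sub>R vector [- x, - y, P]"
proof -
  have "cross3 (Xu X u v) (Xv X u v) = r *\<^sub>R vector [- x, - y, P]"
  proof -
    have "(f1 + r1 * x) * (r * x) + (g1 + r1 * y) * (r * y) = r * P"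
      using circle unfolding P_def lform_real by algebra
    then show ?thesis
      unfolding Xu Xv by (simp add: cross3_def vec_eq_iff forall_3 vector_3 algebra_simps)
  qed
  moreover have "norm (vector [- x, - y, P] :: real^3) = sqrt (1 + P\<^sup>2)"
    using circle unfolding norm_eq_sqrt_inner
    by (simp add: inner_vec_def sum_3 vector_3 power2_eq_square algebra_simps)
  ultimately show ?thesis
    unfolding unit_normal_def using \<open>r > 0\<close> by simp
qed

lemma first_fundamental_form_circle_frame:
  shows "fffE X u v = 1 + f1\<^sup>2 + g1\<^sup>2 + r1\<^sup>2 + 2 * r1 * (f1 * x + g1 * y)"
    and "fffF X u v = r * (g1 * x - f1 * y)"
    and "fffG X u v = r\<^sup>2"
proof -
  have "(f1 + r1 * x) * (f1 + r1 * x) + (g1 + r1 * y) * (g1 + r1 * y) + 1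
      = 1 + f1\<^sup>2 + g1\<^sup>2 + r1\<^sup>2 + 2 * r1 * (f1 * x + g1 * y)"
    using circle by algebra
  then show "fffE X u v = 1 + f1\<^sup>2 + g1\<^sup>2 + r1\<^sup>2 + 2 * r1 * (f1 * x + g1 * y)"
    unfolding fffE_def Xu by (simp add: inner_vec_def sum_3 vector_3)
  show "fffF X u v = r * (g1 * x - f1 * y)"
    unfolding fffF_def Xu Xv by (simp add: inner_vec_def sum_3 vector_3 algebra_simps)
  have "- r * y * (- r * y) + r * x * (r * x) = r\<^sup>2"
    using circle by algebra
  then show "fffG X u v = r\<^sup>2"
    unfolding fffG_def Xv by (simp add: inner_vec_def sum_3 vector_3)
qed

lemma second_fundamental_form_circle_frame:
  defines "w \<equiv> sqrt (1 + (lform f1 g1 r1 x y 1)\<^sup>2)"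
  shows "sffL X u v = - lform f2 g2 r2 x y 1 / w"
    and "sffM X u v = 0"
    and "sffN X u v = r / w"
proof -
  have w: "w > 0"
    by (simp add: w_def add_pos_nonneg)
  note normal = unit_normal_circle_frame[folded w_def]
  have "(f2 + r2 * x) * - x + (g2 + r2 * y) * - y = - lform f2 g2 r2 x y 1"
    using circle unfolding lform_real by algebra
  then show "sffL X u v = - lform f2 g2 r2 x y 1 / w"
    unfolding sffL_def normal Xuu using w by (simp add: inner_vec_def sum_3 vector_3 field_simps)
  show "sffM X u v = 0"
    unfolding sffM_def normal Xuv by (simp add: inner_vec_def sum_3 vector_3 algebra_simps)
  have "- r * x * - x + - r * y * - y = r"
    using circle by algebra
  then show "sffN X u v = r / w"
    unfolding sffN_def normal Xvv using w by (simp add: inner_vec_def sum_3 vector_3 field_simps)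
qed

lemma curvatures_of_circle_frame:
  defines "Q \<equiv> 1 + (lform f1 g1 r1 x y 1)\<^sup>2"
  shows "gauss_curv X u v = - lform f2 g2 r2 x y 1 / (r * Q\<^sup>2)"
    and "mean_curv X u v = lform (2 * r1 * f1 - r * f2) (2 * r1 * g1 - r * g2)
           (1 + f1\<^sup>2 + g1\<^sup>2 + r1\<^sup>2 - r * r2) x y 1 / (2 * r * Q * sqrt Q)"
proof -
  define E0 where "E0 = 1 + f1\<^sup>2 + g1\<^sup>2 + r1\<^sup>2 + 2 * r1 * (f1 * x + g1 * y)"
  define L :: real where "L = lform f2 g2 r2 x y 1"
  have Q: "Q > 0" "sqrt Q > 0" "(sqrt Q)\<^sup>2 = Q"
    by (simp_all add: Q_def add_pos_nonneg)
  note forms = first_fundamental_form_circle_frame second_fundamental_form_circle_frame[folded Q_def]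
  have det: "E0 * r\<^sup>2 - (r * (g1 * x - f1 * y))\<^sup>2 = r\<^sup>2 * Q"
    using circle unfolding E0_def Q_def lform_real by algebra
  have T: "E0 - r * L = lform (2 * r1 * f1 - r * f2) (2 * r1 * g1 - r * g2)
      (1 + f1\<^sup>2 + g1\<^sup>2 + r1\<^sup>2 - r * r2) x y 1"
    unfolding E0_def L_def lform_real by (simp add: algebra_simps)
  show "gauss_curv X u v = - lform f2 g2 r2 x y 1 / (r * Q\<^sup>2)"
    unfolding gauss_curv_def forms E0_def[symmetric] det L_def[symmetric]
    using \<open>r > 0\<close> Q by (simp add: field_simps power2_eq_square)
  show "mean_curv X u v = lform (2 * r1 * f1 - r * f2) (2 * r1 * g1 - r * g2)
           (1 + f1\<^sup>2 + g1\<^sup>2 + r1\<^sup>2 - r * r2) x y 1 / (2 * r * Q * sqrt Q)"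
    unfolding mean_curv_def forms E0_def[symmetric] det L_def[symmetric] T[symmetric]
    using \<open>r > 0\<close> Q by (simp add: field_simps power2_eq_square)
qed

end

section \<open>The Weingarten polynomial\<close>

text \<open>
  With \<open>P = f' x + g' y + r'\<close>, \<open>Q = 1 + P\<^sup>2\<close>, \<open>L = f'' x + g'' y + r''\<close> and \<open>T\<close> the
  numerator of the mean curvature, one has \<open>H = T / (2 r Q\<^sup>3\<^sup>/\<^sup>2)\<close> and
  \<open>K = - L / (r Q\<^sup>2)\<close>; so \<open>a H + b K = c\<close> reads \<open>a T \<surd>Q = 2 c r Q\<^sup>2 + 2 b L\<close>. Squaring and
  homogenising in \<open>(x, y, d)\<close> gives the polynomial below.
\<close>

definition weingarten_poly ::
  "real \<Rightarrow> real \<Rightarrow> real \<Rightarrow> real \<Rightarrow> real \<Rightarrow> real \<Rightarrow> real \<Rightarrow> real \<Rightarrow> real \<Rightarrow> real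
     \<Rightarrow> 'a::real_field \<Rightarrow> 'a \<Rightarrow> 'a \<Rightarrow> 'a" where
  "weingarten_poly a b c r f1 g1 r1 f2 g2 r2 x y d =
     (let P = lform f1 g1 r1 x y d;
          L = lform f2 g2 r2 x y d;
          T = lform (2 * r1 * f1 - r * f2) (2 * r1 * g1 - r * g2) (1 + f1\<^sup>2 + g1\<^sup>2 + r1\<^sup>2 - r * r2) x y d
      in of_real (a\<^sup>2) * T\<^sup>2 * (d\<^sup>2 + P\<^sup>2) * d ^ 4
         - (of_real (2 * c * r) * (d\<^sup>2 + P\<^sup>2)\<^sup>2 + of_real (2 * b) * L * d ^ 3)\<^sup>2)"

text \<open>
  For \<open>c = 0\<close> the polynomial above is \<open>d\<^sup>4\<close> times the following one, which, unlike it, does not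
  vanish identically at \<open>d = 0\<close>.
\<close>

definition weingarten_poly_c0 ::
  "real \<Rightarrow> real \<Rightarrow> real \<Rightarrow> real \<Rightarrow> real \<Rightarrow> real \<Rightarrow> real \<Rightarrow> real \<Rightarrow> real
     \<Rightarrow> 'a::real_field \<Rightarrow> 'a \<Rightarrow> 'a \<Rightarrow> 'a" where
  "weingarten_poly_c0 a b r f1 g1 r1 f2 g2 r2 x y d =
     (let P = lform f1 g1 r1 x y d;
          L = lform f2 g2 r2 x y d;
          T = lform (2 * r1 * f1 - r * f2) (2 * r1 * g1 - r * g2) (1 + f1\<^sup>2 + g1\<^sup>2 + r1\<^sup>2 - r * r2) x y d
      in of_real (a\<^sup>2) * T\<^sup>2 * (d\<^sup>2 + P\<^sup>2) - of_real (4 * b\<^sup>2) * L\<^sup>2 * d\<^sup>2)"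

lemma weingarten_poly_c0_eq:
  "weingarten_poly a b 0 r f1 g1 r1 f2 g2 r2 x y d = d ^ 4 * weingarten_poly_c0 a b r f1 g1 r1 f2 g2 r2 x y d"
  unfolding weingarten_poly_def weingarten_poly_c0_def Let_def
  by (simp only: mult_zero_left mult_zero_right of_real_0 of_real_mult of_real_numeral of_real_power) algebra

lemma weingarten_relation_squared:
  fixes a b c r T L Q :: real
  assumes "r > 0" and "Q > 0"
    and rel: "a * (T / (2 * r * Q * sqrt Q)) + b * (- L / (r * Q\<^sup>2)) = c"
  shows "a\<^sup>2 * T\<^sup>2 * Q = (2 * c * r * Q\<^sup>2 + 2 * b * L)\<^sup>2"
proof -
  define s where "s = sqrt Q"
  have s: "s > 0" "Q = s\<^sup>2"
    using \<open>Q > 0\<close> by (simp_all add: s_def)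
  have "a * T * s = 2 * c * r * Q\<^sup>2 + 2 * b * L"
    using rel \<open>r > 0\<close> s unfolding s_def[symmetric]
    by (simp add: field_simps power2_eq_square)
  then have "(a * T * s)\<^sup>2 = (2 * c * r * Q\<^sup>2 + 2 * b * L)\<^sup>2"
    by simp
  then show ?thesis
    using s by (simp add: power_mult_distrib)
qed

lemma weingarten_poly_zero_on_circle_surface:
  assumes "open I" "u \<in> I"
    and "\<And>s. s \<in> I \<Longrightarrow> f differentiable (at s) \<and> g differentiable (at s) \<and> r differentiable (at s)"
    and "deriv f differentiable (at u)" "deriv g differentiable (at u)" "deriv r differentiable (at u)"
    and "r u > 0"
    and "a * mean_curv (circle_surface f g r) u v + b * gauss_curv (circle_surface f g r) u v = c"
  shows "weingarten_poly a b c (r u) (deriv f u) (deriv g u) (deriv r u)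
           (deriv (deriv f) u) (deriv (deriv g) u) (deriv (deriv r) u) (cos v) (sin v) 1 = (0::real)"
proof -
  have diff: "f differentiable (at u)" "g differentiable (at u)" "r differentiable (at u)"
    using assms(3)[OF assms(2)] by auto
  note curvatures = curvatures_of_circle_frame[OF Xu_circle_surface[OF diff] Xv_circle_surface
      Xuu_circle_surface[OF assms(1-6)] Xuv_circle_surface[OF diff] Xvv_circle_surface
      sin_cos_squared_add2 \<open>r u > 0\<close>]
  define P :: real where "P = lform (deriv f u) (deriv g u) (deriv r u) (cos v) (sin v) 1"
  define L :: real where "L = lform (deriv (deriv f) u) (deriv (deriv g) u) (deriv (deriv r) u) (cos v) (sin v) 1"
  define T :: real where "T = lform (2 * deriv r u * deriv f u - r u * deriv (deriv f) u)
    (2 * deriv r u * deriv g u - r u * deriv (deriv g) u)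
    (1 + (deriv f u)\<^sup>2 + (deriv g u)\<^sup>2 + (deriv r u)\<^sup>2 - r u * deriv (deriv r) u) (cos v) (sin v) 1"
  define Q where "Q = 1 + P\<^sup>2"
  have "Q > 0"
    by (simp add: Q_def add_pos_nonneg)
  moreover have "gauss_curv (circle_surface f g r) u v = - L / (r u * Q\<^sup>2)"
    unfolding L_def Q_def P_def by (rule curvatures(1))
  moreover have "mean_curv (circle_surface f g r) u v = T / (2 * r u * Q * sqrt Q)"
    unfolding T_def Q_def P_def by (rule curvatures(2))
  ultimately have "a * (T / (2 * r u * Q * sqrt Q)) + b * (- L / (r u * Q\<^sup>2)) = c"
    using assms(8) by simp
  then have "a\<^sup>2 * T\<^sup>2 * Q = (2 * c * r u * Q\<^sup>2 + 2 * b * L)\<^sup>2"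
    by (rule weingarten_relation_squared[OF \<open>r u > 0\<close> \<open>Q > 0\<close>])
  then show ?thesis
    unfolding weingarten_poly_def Let_def P_def[symmetric] L_def[symmetric] T_def[symmetric]
    by (simp add: Q_def)
qed

lemma weingarten_poly_of_real:
  "of_real (weingarten_poly a b c r f1 g1 r1 f2 g2 r2 x y d)
     = weingarten_poly a b c r f1 g1 r1 f2 g2 r2 (of_real x) (of_real y) (of_real d)"
  by (simp add: weingarten_poly_def Let_def lform_of_real)

lemma weingarten_poly_c0_of_real:
  "of_real (weingarten_poly_c0 a b r f1 g1 r1 f2 g2 r2 x y d)
     = weingarten_poly_c0 a b r f1 g1 r1 f2 g2 r2 (of_real x) (of_real y) (of_real d)"
  by (simp add: weingarten_poly_c0_def Let_def lform_of_real)

lemma weingarten_poly_scale: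
  "weingarten_poly a b c r f1 g1 r1 f2 g2 r2 (k * x) (k * y) (k * d)
     = k ^ 8 * weingarten_poly a b c r f1 g1 r1 f2 g2 r2 x y d"
  unfolding weingarten_poly_def Let_def lform_scale by algebra

lemma weingarten_poly_c0_scale:
  "weingarten_poly_c0 a b r f1 g1 r1 f2 g2 r2 (k * x) (k * y) (k * d)
     = k ^ 4 * weingarten_poly_c0 a b r f1 g1 r1 f2 g2 r2 x y d"
  unfolding weingarten_poly_c0_def Let_def lform_scale by algebra

lemma weingarten_poly_holomorphic:
  assumes "A holomorphic_on UNIV" "B holomorphic_on UNIV" "C holomorphic_on UNIV"
  shows "(\<lambda>w. weingarten_poly a b c r f1 g1 r1 f2 g2 r2 (A w) (B w) (C w)) holomorphic_on UNIV"
  unfolding weingarten_poly_def lform_def Let_def by (intro holomorphic_intros assms)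

lemma weingarten_poly_c0_holomorphic:
  assumes "A holomorphic_on UNIV" "B holomorphic_on UNIV" "C holomorphic_on UNIV"
  shows "(\<lambda>w. weingarten_poly_c0 a b r f1 g1 r1 f2 g2 r2 (A w) (B w) (C w)) holomorphic_on UNIV"
  unfolding weingarten_poly_c0_def lform_def Let_def by (intro holomorphic_intros assms)

lemma weingarten_poly_isotropic:
  "weingarten_poly a b c r f1 g1 r1 f2 g2 r2 1 \<i> 0 = - (of_real (2 * c * r) * Complex f1 g1 ^ 4)\<^sup>2"
  by (simp add: weingarten_poly_def Let_def lform_isotropic power_mult_distrib flip: power_mult)

lemma weingarten_poly_c0_isotropic:
  "weingarten_poly_c0 a b r f1 g1 r1 f2 g2 r2 1 \<i> 0
     = of_real (a\<^sup>2) * Complex (2 * r1 * f1 - r * f2) (2 * r1 * g1 - r * g2) ^ 2 * Complex f1 g1 ^ 2"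
  by (simp add: weingarten_poly_c0_def Let_def lform_isotropic)

section \<open>Analytic continuation to the isotropic point\<close>

lemma entire_zero_of_zero_on_real_interval:
  fixes h :: "complex \<Rightarrow> complex"
  assumes hol: "h holomorphic_on UNIV" and "e > 0"
    and zero: "\<And>x. \<bar>x - t\<bar> < e \<Longrightarrow> h (of_real x) = 0"
  shows "h w = 0"
proof (rule analytic_continuation[OF hol open_UNIV connected_UNIV subset_UNIV,
         of "of_real t" "of_real ` {x. \<bar>x - t\<bar> < e}"])
  show "(of_real t :: complex) islimpt of_real ` {x. \<bar>x - t\<bar> < e}"
    unfolding islimpt_approachable
  proof (intro allI impI)
    fix \<delta> :: real assume "\<delta> > 0"
    define y where "y = t + min e \<delta> / 2"
    have "\<bar>y - t\<bar> < e" "y \<noteq> t" "dist (complex_of_real y) (of_real t) < \<delta>"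
      using \<open>e > 0\<close> \<open>\<delta> > 0\<close> by (auto simp: y_def dist_norm)
    then show "\<exists>z\<in>complex_of_real ` {x. \<bar>x - t\<bar> < e}. z \<noteq> of_real t \<and> dist z (of_real t) < \<delta>"
      by (intro bexI[of _ "of_real y"]) auto
  qed
qed (use zero in auto)

lemma trig_zero_of_arc_zero:
  fixes P :: "complex \<Rightarrow> complex \<Rightarrow> complex \<Rightarrow> complex"
  assumes hol: "\<And>A B C. A holomorphic_on UNIV \<Longrightarrow> B holomorphic_on UNIV \<Longrightarrow> C holomorphic_on UNIV
                  \<Longrightarrow> (\<lambda>w. P (A w) (B w) (C w)) holomorphic_on UNIV"
    and "e > 0" and arc: "\<And>v. \<bar>v - v0\<bar> < e \<Longrightarrow> P (cos (of_real v)) (sin (of_real v)) 1 = 0"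
  shows "P (cos w) (sin w) 1 = 0"
  by (rule entire_zero_of_zero_on_real_interval[where h = "\<lambda>w. P (cos w) (sin w) 1", OF _ \<open>e > 0\<close> arc])
     (intro hol holomorphic_intros)

lemma exp_eq_imp_cos_sin:
  fixes z w :: complex
  assumes "z \<noteq> 0" and exp: "exp (\<i> * w) = z"
  shows "2 * z * cos w = 1 + z\<^sup>2" and "2 * z * sin w = \<i> * (1 - z\<^sup>2)"
proof -
  have exp': "exp (- (\<i> * w)) = inverse z"
    using exp by (simp add: exp_minus)
  show "2 * z * cos w = 1 + z\<^sup>2"
    unfolding cos_exp_eq exp exp' using \<open>z \<noteq> 0\<close> by (simp add: field_simps power2_eq_square)
  show "2 * z * sin w = \<i> * (1 - z\<^sup>2)"
    unfolding sin_exp_eq exp exp' using \<open>z \<noteq> 0\<close> by (simp add: field_simps power2_eq_square)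
qed

lemma isotropic_zero_of_trig_zero:
  fixes P :: "complex \<Rightarrow> complex \<Rightarrow> complex \<Rightarrow> complex"
  assumes hol: "\<And>A B C. A holomorphic_on UNIV \<Longrightarrow> B holomorphic_on UNIV \<Longrightarrow> C holomorphic_on UNIV
                  \<Longrightarrow> (\<lambda>w. P (A w) (B w) (C w)) holomorphic_on UNIV"
    and hom: "\<And>k x y d. P (k * x) (k * y) (k * d) = k ^ n * P x y d"
    and trig: "\<And>w. P (cos w) (sin w) 1 = 0"
  shows "P 1 \<i> 0 = 0"
proof -
  \<comment> \<open>If \<open>exp (\<i> w) = z\<close> then \<open>2 z (cos w, sin w, 1) = (1 + z\<^sup>2, \<i> (1 - z\<^sup>2), 2 z)\<close>, which tends to \<open>(1, \<i>, 0)\<close> as \<open>z \<rightarrow> 0\<close>.\<close>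
  define h where "h z = P (1 + z\<^sup>2) (\<i> * (1 - z\<^sup>2)) (2 * z)" for z
  have zero: "h z = 0" if "z \<noteq> 0" for z
  proof -
    have "exp (\<i> * (- \<i> * Ln z)) = z"
      using that by simp
    from exp_eq_imp_cos_sin[OF that this]
    have "h z = P (2 * z * cos (- \<i> * Ln z)) (2 * z * sin (- \<i> * Ln z)) (2 * z * 1)"
      by (simp add: h_def)
    also have "\<dots> = 0"
      by (simp only: hom trig mult_zero_right)
    finally show ?thesis .
  qed
  have "h holomorphic_on UNIV"
    unfolding h_def by (intro hol holomorphic_intros)
  then have "h 0 = 0"
    by (rule entire_zero_of_zero_on_real_interval[where e = 1 and t = 1]) (auto intro: zero)
  then show ?thesis
    by (simp add: h_def)
qed

lemma real_circle_zero_of_trig_zero: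
  fixes P :: "complex \<Rightarrow> complex \<Rightarrow> complex \<Rightarrow> complex"
  assumes trig: "\<And>w. P (cos w) (sin w) 1 = 0" and "x\<^sup>2 + y\<^sup>2 = 1"
  shows "P (of_real x) (of_real y) 1 = 0"
proof -
  obtain t where "x = cos t" "y = sin t"
    using sincos_total_2pi[OF \<open>x\<^sup>2 + y\<^sup>2 = 1\<close>] by blast
  then show ?thesis
    using trig[of "of_real t"] by (simp add: cos_of_real sin_of_real)
qed

lemma weingarten_poly_isotropic_zero:
  assumes "e > 0"
    and arc: "\<And>v. \<bar>v - v0\<bar> < e \<Longrightarrow> weingarten_poly a b c r f1 g1 r1 f2 g2 r2 (cos v) (sin v) 1 = (0::real)"
  shows "weingarten_poly a b c r f1 g1 r1 f2 g2 r2 1 \<i> 0 = (0::complex)"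
proof (rule isotropic_zero_of_trig_zero[where P = "weingarten_poly a b c r f1 g1 r1 f2 g2 r2",
      OF weingarten_poly_holomorphic weingarten_poly_scale])
  show "weingarten_poly a b c r f1 g1 r1 f2 g2 r2 (cos w) (sin w) 1 = 0" for w :: complex
  proof (rule trig_zero_of_arc_zero[where P = "weingarten_poly a b c r f1 g1 r1 f2 g2 r2",
        OF weingarten_poly_holomorphic \<open>e > 0\<close>])
    fix v assume "\<bar>v - v0\<bar> < e"
    from arc[OF this]
    have "of_real (weingarten_poly a b c r f1 g1 r1 f2 g2 r2 (cos v) (sin v) 1) = (0::complex)"
      by simp
    then show "weingarten_poly a b c r f1 g1 r1 f2 g2 r2 (cos (complex_of_real v)) (sin (of_real v)) 1 = 0"
      by (simp only: weingarten_poly_of_real cos_of_real sin_of_real of_real_1)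
  qed
qed

lemma weingarten_poly_c0_zeros:
  assumes "e > 0"
    and arc: "\<And>v. \<bar>v - v0\<bar> < e \<Longrightarrow> weingarten_poly a b 0 r f1 g1 r1 f2 g2 r2 (cos v) (sin v) 1 = (0::real)"
  shows "x\<^sup>2 + y\<^sup>2 = 1 \<Longrightarrow> weingarten_poly_c0 a b r f1 g1 r1 f2 g2 r2 x y 1 = (0::real)"
    and "weingarten_poly_c0 a b r f1 g1 r1 f2 g2 r2 1 \<i> 0 = (0::complex)"
proof -
  have trig: "weingarten_poly_c0 a b r f1 g1 r1 f2 g2 r2 (cos w) (sin w) 1 = 0" for w :: complex
  proof (rule trig_zero_of_arc_zero[where P = "weingarten_poly_c0 a b r f1 g1 r1 f2 g2 r2",
        OF weingarten_poly_c0_holomorphic \<open>e > 0\<close>])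
    fix v assume "\<bar>v - v0\<bar> < e"
    from arc[OF this]
    have "of_real (weingarten_poly_c0 a b r f1 g1 r1 f2 g2 r2 (cos v) (sin v) 1) = (0::complex)"
      by (simp add: weingarten_poly_c0_eq)
    then show "weingarten_poly_c0 a b r f1 g1 r1 f2 g2 r2 (cos (complex_of_real v)) (sin (of_real v)) 1 = 0"
      by (simp only: weingarten_poly_c0_of_real cos_of_real sin_of_real of_real_1)
  qed
  show "weingarten_poly_c0 a b r f1 g1 r1 f2 g2 r2 x y 1 = (0::real)" if "x\<^sup>2 + y\<^sup>2 = 1"
  proof -
    have "of_real (weingarten_poly_c0 a b r f1 g1 r1 f2 g2 r2 x y 1) = (0::complex)"
      using real_circle_zero_of_trig_zero[where P = "weingarten_poly_c0 a b r f1 g1 r1 f2 g2 r2", OF trig that]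
      by (simp only: weingarten_poly_c0_of_real of_real_1)
    then show ?thesis
      by simp
  qed
  show "weingarten_poly_c0 a b r f1 g1 r1 f2 g2 r2 1 \<i> 0 = (0::complex)"
    by (rule isotropic_zero_of_trig_zero[where P = "weingarten_poly_c0 a b r f1 g1 r1 f2 g2 r2",
          OF weingarten_poly_c0_holomorphic weingarten_poly_c0_scale trig])
qed

section \<open>Consequences for the 2-jet of the circles\<close>

lemma lform_zero_on_circle:
  assumes "\<And>x y. x\<^sup>2 + y\<^sup>2 = 1 \<Longrightarrow> lform \<alpha> \<beta> \<gamma> x y 1 = (0::real)"
  shows "\<alpha> = 0 \<and> \<beta> = 0 \<and> \<gamma> = 0"
  using assms[of 1 0] assms[of "-1" 0] assms[of 0 1] by (simp add: lform_def)

lemma slope_zero_of_weingarten_isotropic: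
  assumes "weingarten_poly a b c r f1 g1 r1 f2 g2 r2 1 \<i> 0 = (0::complex)" and "c \<noteq> 0" and "r \<noteq> 0"
  shows "f1 = 0 \<and> g1 = 0"
  using assms by (simp add: weingarten_poly_isotropic Complex_eq_0)

lemma second_derivs_zero_of_weingarten_c0_a0:
  assumes "\<And>x y. x\<^sup>2 + y\<^sup>2 = 1 \<Longrightarrow> weingarten_poly_c0 0 b r f1 g1 r1 f2 g2 r2 x y 1 = (0::real)"
    and "b \<noteq> 0"
  shows "f2 = 0 \<and> g2 = 0 \<and> r2 = 0"
proof (rule lform_zero_on_circle)
  fix x y :: real assume "x\<^sup>2 + y\<^sup>2 = 1"
  from assms(1)[OF this] show "lform f2 g2 r2 x y 1 = 0"
    using \<open>b \<noteq> 0\<close> by (simp add: weingarten_poly_c0_def Let_def)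
qed

lemma riemann_equations_of_weingarten_c0_b0:
  assumes "\<And>x y. x\<^sup>2 + y\<^sup>2 = 1 \<Longrightarrow> weingarten_poly_c0 a 0 r f1 g1 r1 f2 g2 r2 x y 1 = (0::real)"
    and "a \<noteq> 0"
  shows "r * f2 = 2 * r1 * f1 \<and> r * g2 = 2 * r1 * g1 \<and> 1 + f1\<^sup>2 + g1\<^sup>2 + r1\<^sup>2 - r * r2 = 0"
proof -
  have "lform (2 * r1 * f1 - r * f2) (2 * r1 * g1 - r * g2) (1 + f1\<^sup>2 + g1\<^sup>2 + r1\<^sup>2 - r * r2) x y 1 = 0"
    if "x\<^sup>2 + y\<^sup>2 = 1" for x y :: real
  proof -
    have "1 + (lform f1 g1 r1 x y 1)\<^sup>2 > (0::real)"
      by (simp add: add_pos_nonneg)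
    then show ?thesis
      using assms(1)[OF that] \<open>a \<noteq> 0\<close> by (simp add: weingarten_poly_c0_def Let_def)
  qed
  from lform_zero_on_circle[OF this] show ?thesis
    by simp
qed

lemma unit_circle_projection:
  fixes p q t :: real
  assumes "p\<^sup>2 + q\<^sup>2 > 0" and "t\<^sup>2 \<le> p\<^sup>2 + q\<^sup>2"
  obtains x y where "x\<^sup>2 + y\<^sup>2 = 1" and "p * x + q * y = t"
proof
  define n where "n = p\<^sup>2 + q\<^sup>2"
  define s where "s = sqrt (n - t\<^sup>2)"
  have n: "n > 0" and s: "s\<^sup>2 = n - t\<^sup>2"
    using assms by (simp_all add: n_def s_def)
  have "(t * p - s * q)\<^sup>2 + (t * q + s * p)\<^sup>2 = (t\<^sup>2 + s\<^sup>2) * n"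
    unfolding n_def by algebra
  then show "((t * p - s * q) / n)\<^sup>2 + ((t * q + s * p) / n)\<^sup>2 = 1"
    using n s by (simp add: power_divide add_divide_distrib[symmetric] power2_eq_square)
  have "p * (t * p - s * q) + q * (t * q + s * p) = t * n"
    unfolding n_def by algebra
  then have "(p * (t * p - s * q) + q * (t * q + s * p)) / n = t"
    using n by simp
  then show "p * ((t * p - s * q) / n) + q * ((t * q + s * p) / n) = t"
    by (simp only: times_divide_eq_right add_divide_distrib[symmetric])
qed

lemma quadratic_identity_at_three_points:
  fixes A B k R s \<rho> :: real
  assumes "B > 0" and "\<rho> > 0"
    and ident: "\<And>t. t \<in> {\<rho>, - \<rho>, 0} \<Longrightarrow> A * (1 + (t + s)\<^sup>2) = B * (k * t + R)\<^sup>2"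
  shows "A = 0 \<and> k = 0 \<and> R = 0"
proof -
  have e1: "A * (1 + (\<rho> + s)\<^sup>2) = B * (k * \<rho> + R)\<^sup>2"
    and e2: "A * (1 + (- \<rho> + s)\<^sup>2) = B * (k * - \<rho> + R)\<^sup>2"
    and e3: "A * (1 + s\<^sup>2) = B * R\<^sup>2"
    using ident[of \<rho>] ident[of "- \<rho>"] ident[of 0] by simp_all
  have "4 * \<rho> * (A * s) = 4 * \<rho> * (B * k * R)"
    using e1 e2 by algebra
  then have h1: "A * s = B * k * R"
    using \<open>\<rho> > 0\<close> by simp
  have "2 * \<rho>\<^sup>2 * A = 2 * \<rho>\<^sup>2 * (B * k\<^sup>2)"
    using e1 e2 e3 by algebra
  then have h2: "A = B * k\<^sup>2"
    using \<open>\<rho> > 0\<close> by simp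
  have "B * (k\<^sup>2 * (1 + s\<^sup>2)) = B * R\<^sup>2"
    using e3 h2 by (simp add: algebra_simps)
  then have h3: "k\<^sup>2 * (1 + s\<^sup>2) = R\<^sup>2"
    using \<open>B > 0\<close> by simp
  have "k * (k * s - R) = 0"
    using h1 h2 \<open>B > 0\<close> by (simp add: algebra_simps power2_eq_square)
  then have "k = 0"
    using h3 by (auto simp: algebra_simps power2_eq_square)
  then show ?thesis
    using h2 h3 by simp
qed

lemma weingarten_poly_c0_if_T_constant:
  assumes "r * f2 = 2 * r1 * f1" and "r * g2 = 2 * r1 * g1" and "r \<noteq> 0"
  shows "weingarten_poly_c0 a b r f1 g1 r1 f2 g2 r2 x y 1
    = a\<^sup>2 * (1 + f1\<^sup>2 + g1\<^sup>2 + r1\<^sup>2 - r * r2)\<^sup>2 * (1 + (f1 * x + g1 * y + r1)\<^sup>2)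
      - 4 * b\<^sup>2 * (2 * r1 / r * (f1 * x + g1 * y) + r2)\<^sup>2"
proof -
  have "lform f2 g2 r2 x y 1 = 2 * r1 / r * (f1 * x + g1 * y) + r2"
  proof -
    define k where "k = 2 * r1 / r"
    have "f2 = k * f1" and "g2 = k * g1"
      using assms by (simp_all add: k_def field_simps)
    then have "lform f2 g2 r2 x y 1 = k * (f1 * x + g1 * y) + r2"
      by (simp add: lform_real algebra_simps)
    then show ?thesis
      by (simp only: k_def)
  qed
  moreover have "lform (2 * r1 * f1 - r * f2) (2 * r1 * g1 - r * g2) (1 + f1\<^sup>2 + g1\<^sup>2 + r1\<^sup>2 - r * r2) x y 1
      = 1 + f1\<^sup>2 + g1\<^sup>2 + r1\<^sup>2 - r * r2"
    using assms(1,2) by (simp add: lform_real)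
  moreover have "lform f1 g1 r1 x y 1 = f1 * x + g1 * y + r1"
    by (simp add: lform_real)
  ultimately show ?thesis
    by (simp add: weingarten_poly_c0_def Let_def)
qed

lemma slope_zero_of_weingarten_c0:
  assumes circle: "\<And>x y. x\<^sup>2 + y\<^sup>2 = 1 \<Longrightarrow> weingarten_poly_c0 a b r f1 g1 r1 f2 g2 r2 x y 1 = (0::real)"
    and iso: "weingarten_poly_c0 a b r f1 g1 r1 f2 g2 r2 1 \<i> 0 = (0::complex)"
    and "a \<noteq> 0" and "b \<noteq> 0" and "r \<noteq> 0"
  shows "f1 = 0 \<and> g1 = 0"
proof (rule ccontr)
  \<comment> \<open>Otherwise the isotropic point makes \<open>T\<close> constant on the circle, and three points of the circle then force \<open>1 + f1\<^sup>2 + g1\<^sup>2 + r1\<^sup>2 = 0\<close>.\<close>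
  assume "\<not> (f1 = 0 \<and> g1 = 0)"
  then have n: "f1\<^sup>2 + g1\<^sup>2 > 0"
    by (simp add: sum_power2_gt_zero_iff)
  with iso \<open>a \<noteq> 0\<close> have "Complex (2 * r1 * f1 - r * f2) (2 * r1 * g1 - r * g2) = 0"
    by (auto simp: weingarten_poly_c0_isotropic Complex_eq_0)
  then have "r * f2 = 2 * r1 * f1" and "r * g2 = 2 * r1 * g1"
    by (simp_all add: Complex_eq_0)
  note W = weingarten_poly_c0_if_T_constant[OF this \<open>r \<noteq> 0\<close>]
  define \<tau> where "\<tau> = 1 + f1\<^sup>2 + g1\<^sup>2 + r1\<^sup>2 - r * r2"
  have on_circle: "a\<^sup>2 * \<tau>\<^sup>2 * (1 + (t + r1)\<^sup>2) = 4 * b\<^sup>2 * (2 * r1 / r * t + r2)\<^sup>2"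
    if "t \<in> {sqrt (f1\<^sup>2 + g1\<^sup>2), - sqrt (f1\<^sup>2 + g1\<^sup>2), 0}" for t
  proof -
    have "t\<^sup>2 \<le> f1\<^sup>2 + g1\<^sup>2"
      using that n by auto
    then obtain x y where xy: "x\<^sup>2 + y\<^sup>2 = 1" and t: "f1 * x + g1 * y = t"
      using unit_circle_projection n by metis
    show ?thesis
      using circle[OF xy] unfolding W t \<tau>_def by simp
  qed
  have "4 * b\<^sup>2 > 0" and "sqrt (f1\<^sup>2 + g1\<^sup>2) > 0"
    using \<open>b \<noteq> 0\<close> n by simp_all
  from quadratic_identity_at_three_points[OF this on_circle]
  have "a\<^sup>2 * \<tau>\<^sup>2 = 0" and "r2 = 0"
    by auto
  moreover have "\<tau> > 0" if "r2 = 0"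
    using that by (simp add: \<tau>_def add_pos_nonneg)
  ultimately show False
    using \<open>a \<noteq> 0\<close> by simp
qed

section \<open>Integration along the axis\<close>

lemma constant_of_deriv_zero:
  fixes h :: "real \<Rightarrow> real"
  assumes "convex I" and "\<And>u. u \<in> I \<Longrightarrow> (h has_real_derivative 0) (at u)"
  shows "\<exists>c. \<forall>u\<in>I. h u = c"
  using has_field_derivative_zero_constant[OF assms(1) has_field_derivative_at_within[OF assms(2)]] .

lemma affine_fun_on_of_deriv2_zero:
  fixes h :: "real \<Rightarrow> real"
  assumes "convex I"
    and dh: "\<And>u. u \<in> I \<Longrightarrow> h differentiable (at u)"
    and ddh: "\<And>u. u \<in> I \<Longrightarrow> deriv h differentiable (at u)"
    and zero: "\<And>u. u \<in> I \<Longrightarrow> deriv (deriv h) u = 0"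
  shows "affine_fun_on I h"
proof -
  have "(deriv h has_real_derivative 0) (at u)" if "u \<in> I" for u
    using DERIV_deriv_iff_real_differentiable[THEN iffD2, OF ddh[OF that]] zero[OF that] by simp
  then have "\<exists>\<alpha>. \<forall>u\<in>I. deriv h u = \<alpha>"
    by (rule constant_of_deriv_zero[OF \<open>convex I\<close>])
  then obtain \<alpha> where \<alpha>: "\<And>u. u \<in> I \<Longrightarrow> deriv h u = \<alpha>"
    by blast
  have "((\<lambda>u. h u - \<alpha> * u) has_real_derivative 0) (at u)" if "u \<in> I" for u
  proof -
    have "(h has_real_derivative \<alpha>) (at u)"
      using DERIV_deriv_iff_real_differentiable[THEN iffD2, OF dh[OF that]] \<alpha>[OF that] by simp
    then show ?thesis
      by (auto intro!: derivative_eq_intros)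
  qed
  then have "\<exists>\<beta>. \<forall>u\<in>I. h u - \<alpha> * u = \<beta>"
    by (rule constant_of_deriv_zero[OF \<open>convex I\<close>])
  then obtain \<beta> where \<beta>: "\<And>u. u \<in> I \<Longrightarrow> h u - \<alpha> * u = \<beta>"
    by blast
  have "h u = \<alpha> * u + \<beta>" if "u \<in> I" for u
    using \<beta>[OF that] by linarith
  then show ?thesis
    unfolding affine_fun_on_def by blast
qed

lemma ex_multiple_of_square:
  fixes h \<rho> h' \<rho>' :: "real \<Rightarrow> real"
  assumes "convex I"
    and dh: "\<And>u. u \<in> I \<Longrightarrow> (h has_real_derivative h' u) (at u)"
    and d\<rho>: "\<And>u. u \<in> I \<Longrightarrow> (\<rho> has_real_derivative \<rho>' u) (at u)"
    and pos: "\<And>u. u \<in> I \<Longrightarrow> \<rho> u > 0"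
    and ode: "\<And>u. u \<in> I \<Longrightarrow> \<rho> u * h' u = 2 * \<rho>' u * h u"
  shows "\<exists>\<kappa>. \<forall>u\<in>I. h u = \<kappa> * (\<rho> u)\<^sup>2"
proof -
  have "((\<lambda>u. h u / (\<rho> u)\<^sup>2) has_real_derivative 0) (at u)" if "u \<in> I" for u
  proof -
    have "\<rho> u \<noteq> 0"
      using pos[OF that] by simp
    then have "((\<lambda>u. h u / (\<rho> u)\<^sup>2) has_real_derivative
        (h' u * (\<rho> u)\<^sup>2 - h u * (2 * \<rho> u * \<rho>' u)) / ((\<rho> u)\<^sup>2)\<^sup>2) (at u)"
      using dh[OF that] d\<rho>[OF that] by (auto intro!: derivative_eq_intros simp: power2_eq_square)
    moreover have "h' u * (\<rho> u)\<^sup>2 - h u * (2 * \<rho> u * \<rho>' u) = 0"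
      using ode[OF that] by (simp add: power2_eq_square algebra_simps)
    ultimately show ?thesis
      by simp
  qed
  then have "\<exists>\<kappa>. \<forall>u\<in>I. h u / (\<rho> u)\<^sup>2 = \<kappa>"
    by (rule constant_of_deriv_zero[OF \<open>convex I\<close>])
  then obtain \<kappa> where \<kappa>: "\<And>u. u \<in> I \<Longrightarrow> h u / (\<rho> u)\<^sup>2 = \<kappa>"
    by blast
  have "h u = \<kappa> * (\<rho> u)\<^sup>2" if "u \<in> I" for u
    using \<kappa>[OF that] pos[OF that] by (simp add: field_simps)
  then show ?thesis
    by blast
qed

lemma smooth_on_differentiable:
  assumes "smooth_on I h" and "u \<in> I"
  shows "h differentiable (at u)" and "deriv h differentiable (at u)"
proof -
  have "(deriv ^^ 0) h differentiable (at u)" and "(deriv ^^ 1) h differentiable (at u)"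
    using assms unfolding smooth_on_def by blast+
  then show "h differentiable (at u)" and "deriv h differentiable (at u)"
    by simp_all
qed

section \<open>The classification\<close>

locale circle_foliated_weingarten_surface =
  fixes f g r :: "real \<Rightarrow> real" and \<Omega> :: "(real \<times> real) set" and a b c :: real
  assumes open_domain: "open \<Omega>" and connected_domain: "connected \<Omega>"
    and smooth: "smooth_on (fst ` \<Omega>) f" "smooth_on (fst ` \<Omega>) g" "smooth_on (fst ` \<Omega>) r"
    and radius_pos: "\<forall>u\<in>fst ` \<Omega>. r u > 0"
    and nondegenerate: "a\<^sup>2 + b\<^sup>2 \<noteq> 0"
    and weingarten: "\<forall>(u, v)\<in>\<Omega>. a * mean_curv (circle_surface f g r) u v
                                  + b * gauss_curv (circle_surface f g r) u v = c"
begin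

lemma open_heights: "open (fst ` \<Omega>)"
  using open_domain by (rule open_image_fst)

lemma convex_heights: "convex (fst ` \<Omega>)"
proof -
  have "connected (fst ` \<Omega>)"
    by (rule connected_continuous_image[OF continuous_on_fst[OF continuous_on_id] connected_domain])
  then show ?thesis
    using is_interval_connected_1 is_interval_convex_1 by blast
qed

lemma differentiable_at_heights:
  assumes "u \<in> fst ` \<Omega>"
  shows "f differentiable (at u)" "g differentiable (at u)" "r differentiable (at u)"
    and "deriv f differentiable (at u)" "deriv g differentiable (at u)" "deriv r differentiable (at u)"
  using smooth_on_differentiable smooth assms by blast+

lemma has_real_derivative_at_heights:
  assumes "u \<in> fst ` \<Omega>"
  shows "(f has_real_derivative deriv f u) (at u)" "(g has_real_derivative deriv g u) (at u)"
    "(r has_real_derivative deriv r u) (at u)"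
    "(deriv f has_real_derivative deriv (deriv f) u) (at u)"
    "(deriv g has_real_derivative deriv (deriv g) u) (at u)"
  using differentiable_at_heights[OF assms] by (simp_all add: DERIV_deriv_iff_real_differentiable)

abbreviation circle_poly :: "real \<Rightarrow> 'a::real_field \<Rightarrow> 'a \<Rightarrow> 'a \<Rightarrow> 'a" where
  "circle_poly u \<equiv> weingarten_poly a b c (r u) (deriv f u) (deriv g u) (deriv r u)
     (deriv (deriv f) u) (deriv (deriv g) u) (deriv (deriv r) u)"

abbreviation circle_poly_c0 :: "real \<Rightarrow> 'a::real_field \<Rightarrow> 'a \<Rightarrow> 'a \<Rightarrow> 'a" where
  "circle_poly_c0 u \<equiv> weingarten_poly_c0 a b (r u) (deriv f u) (deriv g u) (deriv r u)
     (deriv (deriv f) u) (deriv (deriv g) u) (deriv (deriv r) u)"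

lemma circle_poly_zero_on_arc:
  assumes "u \<in> fst ` \<Omega>"
  obtains v0 e where "e > 0" and "\<And>v. \<bar>v - v0\<bar> < e \<Longrightarrow> circle_poly u (cos v) (sin v) 1 = (0::real)"
proof -
  obtain v0 where "(u, v0) \<in> \<Omega>"
    using assms by force
  then obtain e where "e > 0" and ball: "ball (u, v0) e \<subseteq> \<Omega>"
    using open_domain open_contains_ball by blast
  have "circle_poly u (cos v) (sin v) 1 = (0::real)" if "\<bar>v - v0\<bar> < e" for v
  proof (rule weingarten_poly_zero_on_circle_surface[OF open_heights assms])
    have "(u, v) \<in> \<Omega>"
      using that ball by (auto simp: dist_Pair_Pair dist_real_def abs_minus_commute)
    then show "a * mean_curv (circle_surface f g r) u v + b * gauss_curv (circle_surface f g r) u v = c"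
      using weingarten by blast
  qed (use differentiable_at_heights radius_pos assms in auto)
  with \<open>e > 0\<close> show ?thesis
    using that by blast
qed

lemma circle_poly_c0_zeros:
  assumes "u \<in> fst ` \<Omega>" and "c = 0"
  shows "x\<^sup>2 + y\<^sup>2 = 1 \<Longrightarrow> circle_poly_c0 u x y 1 = (0::real)"
    and "circle_poly_c0 u 1 \<i> 0 = (0::complex)"
proof -
  obtain v0 e where "e > 0" and arc: "\<And>v. \<bar>v - v0\<bar> < e \<Longrightarrow> circle_poly u (cos v) (sin v) 1 = (0::real)"
    using circle_poly_zero_on_arc[OF assms(1)] by blast
  from arc \<open>c = 0\<close> have arc0: "\<And>v. \<bar>v - v0\<bar> < e \<Longrightarrow> weingarten_poly a b 0 (r u) (deriv f u)
      (deriv g u) (deriv r u) (deriv (deriv f) u) (deriv (deriv g) u) (deriv (deriv r) u) (cos v) (sin v) 1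
      = (0::real)"
    by simp
  show "x\<^sup>2 + y\<^sup>2 = 1 \<Longrightarrow> circle_poly_c0 u x y 1 = (0::real)"
    by (rule weingarten_poly_c0_zeros(1)[OF \<open>e > 0\<close> arc0])
  show "circle_poly_c0 u 1 \<i> 0 = (0::complex)"
    by (rule weingarten_poly_c0_zeros(2)[OF \<open>e > 0\<close> arc0])
qed

lemma slopes_vanish:
  assumes "u \<in> fst ` \<Omega>" and "c \<noteq> 0 \<or> a \<noteq> 0 \<and> b \<noteq> 0"
  shows "deriv f u = 0 \<and> deriv g u = 0"
proof -
  have "r u \<noteq> 0"
    using radius_pos assms(1) by fastforce
  show ?thesis
  proof (cases "c = 0")
    case True
    then show ?thesis
      using slope_zero_of_weingarten_c0[OF circle_poly_c0_zeros[OF assms(1) True]] assms(2) \<open>r u \<noteq> 0\<close>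
      by blast
  next
    case False
    obtain v0 e where "e > 0" and "\<And>v. \<bar>v - v0\<bar> < e \<Longrightarrow> circle_poly u (cos v) (sin v) 1 = (0::real)"
      using circle_poly_zero_on_arc[OF assms(1)] by blast
    then show ?thesis
      using slope_zero_of_weingarten_isotropic[OF weingarten_poly_isotropic_zero] False \<open>r u \<noteq> 0\<close>
      by blast
  qed
qed

lemma second_derivs_vanish:
  assumes "u \<in> fst ` \<Omega>" and "c = 0" and "a = 0"
  shows "deriv (deriv f) u = 0 \<and> deriv (deriv g) u = 0 \<and> deriv (deriv r) u = 0"
proof -
  have "b \<noteq> 0"
    using nondegenerate \<open>a = 0\<close> by simp
  then show ?thesis
    using second_derivs_zero_of_weingarten_c0_a0 circle_poly_c0_zeros(1)[OF assms(1,2)] \<open>a = 0\<close>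
    by blast
qed

lemma riemann_equations:
  assumes "u \<in> fst ` \<Omega>" and "c = 0" and "b = 0"
  shows "r u * deriv (deriv f) u = 2 * deriv r u * deriv f u"
    and "r u * deriv (deriv g) u = 2 * deriv r u * deriv g u"
    and "1 + (deriv f u)\<^sup>2 + (deriv g u)\<^sup>2 + (deriv r u)\<^sup>2 - r u * deriv (deriv r) u = 0"
proof -
  have "a \<noteq> 0"
    using nondegenerate \<open>b = 0\<close> by simp
  then show "r u * deriv (deriv f) u = 2 * deriv r u * deriv f u"
    and "r u * deriv (deriv g) u = 2 * deriv r u * deriv g u"
    and "1 + (deriv f u)\<^sup>2 + (deriv g u)\<^sup>2 + (deriv r u)\<^sup>2 - r u * deriv (deriv r) u = 0"
    using riemann_equations_of_weingarten_c0_b0 circle_poly_c0_zeros(1)[OF assms(1,2)] \<open>b = 0\<close>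
    by blast+
qed

lemma center_constant:
  assumes "\<And>u. u \<in> fst ` \<Omega> \<Longrightarrow> deriv f u = 0 \<and> deriv g u = 0"
  shows "\<exists>f0 g0. \<forall>u\<in>fst ` \<Omega>. f u = f0 \<and> g u = g0"
proof -
  have "\<exists>f0. \<forall>u\<in>fst ` \<Omega>. f u = f0" and "\<exists>g0. \<forall>u\<in>fst ` \<Omega>. g u = g0"
    using constant_of_deriv_zero[OF convex_heights] has_real_derivative_at_heights assms by metis+
  then show ?thesis
    by blast
qed

lemma riemann_or_revolution:
  assumes "c = 0" and "b = 0"
  shows "(\<exists>f0 g0. \<forall>u\<in>fst ` \<Omega>. f u = f0 \<and> g u = g0)
       \<or> (\<exists>lam mu. lam\<^sup>2 + mu\<^sup>2 \<noteq> 0 \<and>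
            (\<forall>u\<in>fst ` \<Omega>. deriv f u = lam * (r u)\<^sup>2 \<and> deriv g u = mu * (r u)\<^sup>2 \<and>
               1 + (lam\<^sup>2 + mu\<^sup>2) * (r u) ^ 4 + (deriv r u)\<^sup>2 - r u * deriv (deriv r) u = 0))"
proof -
  note ode = riemann_equations[OF _ assms]
  obtain \<kappa> where \<kappa>: "\<forall>u\<in>fst ` \<Omega>. deriv f u = \<kappa> * (r u)\<^sup>2"
    using ex_multiple_of_square[OF convex_heights] has_real_derivative_at_heights radius_pos ode(1) by metis
  obtain \<mu> where \<mu>: "\<forall>u\<in>fst ` \<Omega>. deriv g u = \<mu> * (r u)\<^sup>2"
    using ex_multiple_of_square[OF convex_heights] has_real_derivative_at_heights radius_pos ode(2) by metis
  show ?thesis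
  proof (cases "\<kappa>\<^sup>2 + \<mu>\<^sup>2 = 0")
    case True
    then show ?thesis
      using center_constant \<kappa> \<mu> by (simp add: sum_power2_eq_zero_iff)
  next
    case False
    have "deriv f u = \<kappa> * (r u)\<^sup>2 \<and> deriv g u = \<mu> * (r u)\<^sup>2 \<and>
        1 + (\<kappa>\<^sup>2 + \<mu>\<^sup>2) * (r u) ^ 4 + (deriv r u)\<^sup>2 - r u * deriv (deriv r) u = 0"
      if "u \<in> fst ` \<Omega>" for u
    proof -
      have "deriv f u = \<kappa> * (r u)\<^sup>2" and "deriv g u = \<mu> * (r u)\<^sup>2"
        using \<kappa> \<mu> that by blast+
      moreover from this have "(deriv f u)\<^sup>2 + (deriv g u)\<^sup>2 = (\<kappa>\<^sup>2 + \<mu>\<^sup>2) * (r u) ^ 4"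
        by algebra
      ultimately show ?thesis
        using ode(3)[OF that] by simp
    qed
    with False show ?thesis
      by blast
  qed
qed

end

theorem theorem1p3:
  fixes f g r :: "real \<Rightarrow> real" and \<Omega> :: "(real \<times> real) set" and a b c :: real
  assumes "open \<Omega>" and "connected \<Omega>" and "\<Omega> \<noteq> {}"
    and "smooth_on (fst ` \<Omega>) f" and "smooth_on (fst ` \<Omega>) g" and "smooth_on (fst ` \<Omega>) r"
    and "\<forall>u\<in>fst ` \<Omega>. r u > 0"
    and "a\<^sup>2 + b\<^sup>2 \<noteq> 0"
    and "\<forall>(u, v)\<in>\<Omega>. a * mean_curv (circle_surface f g r) u v
                         + b * gauss_curv (circle_surface f g r) u v = c"
  shows "(\<exists>f0 g0. \<forall>u\<in>fst ` \<Omega>. f u = f0 \<and> g u = g0)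
       \<or> (\<exists>lam mu. lam\<^sup>2 + mu\<^sup>2 \<noteq> 0 \<and>
            (\<forall>u\<in>fst ` \<Omega>. deriv f u = lam * (r u)\<^sup>2 \<and> deriv g u = mu * (r u)\<^sup>2 \<and>
               1 + (lam\<^sup>2 + mu\<^sup>2) * (r u) ^ 4 + (deriv r u)\<^sup>2
                 - r u * deriv (deriv r) u = 0))
       \<or> (affine_fun_on (fst ` \<Omega>) f \<and> affine_fun_on (fst ` \<Omega>) g \<and> affine_fun_on (fst ` \<Omega>) r)"
proof -
  interpret circle_foliated_weingarten_surface f g r \<Omega> a b c
    using assms by (simp add: circle_foliated_weingarten_surface_def)
  consider "c \<noteq> 0 \<or> a \<noteq> 0 \<and> b \<noteq> 0" | "c = 0" "a = 0" | "c = 0" "b = 0"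
    by blast
  then show ?thesis
  proof cases
    case 1
    then show ?thesis
      using center_constant slopes_vanish by blast
  next
    case 2
    then have "affine_fun_on (fst ` \<Omega>) h" if "h \<in> {f, g, r}" for h
      using affine_fun_on_of_deriv2_zero[OF convex_heights] differentiable_at_heights second_derivs_vanish
        that by auto
    then show ?thesis
      by simp
  next
    case 3
    then show ?thesis
      using riemann_or_revolution by blast
  qed
qed

end
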